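(* Let $G$ be a graph such that the elementary algebraic cycles of $G$ are the circuits of a matroid $M$ on $E(G)$ (the algebraic cycle matroid of $G$). Then the cocircuits of $M$ are precisely the skew cuts of $G$.
   Context: Matroids may be infinite: a matroid on $E$ is given by $\mathcal I\subseteq 2^E$ with $\emptyset\in\mathcal I$; $\mathcal I$ closed under subsets; for non-maximal $I\in\mathcal I$ and maximal $I'\in\mathcal I$ some $x\in I'\setminus I$ has $I\cup\{x\}\in\mathcal I$; and for every $I\in\mathcal I$ and $I\subseteq X\subseteq E$ the set $\{I'\in\mathcal I:I\subseteq I'\subseteq X\}$ has a maximal element. Circuits are minimal dependent sets; the dual $M^*$ has as bases the complements of bases of $M$; cocircuits of $M$ are the circuits of $M^*$. Graphs may have parallel edges and loops. The elementary algebraic cycles of $G$ are the edge sets of the finite cycles and of the double rays (two-way infinite paths) of $G$. A ray is a one-way infinite path. A cut $E(A,B)$ is the set of edges between the classes $A,B$ of a partition of $V(G)$. A side $A$ of a cut is small if the induced subgraph $G[A]$ contains no ray. A non-empty cut $F$ is skew if one of its sides is small and $F$ is minimal with this property among the non-empty cuts of $G$ (no non-empty cut properly contained in $F$ has a small side). *)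

theory Defs
  imports Main
begin

definition maximal_in :: "'a set set \<Rightarrow> 'a set \<Rightarrow> bool" where
  "maximal_in S X \<longleftrightarrow> X \<in> S \<and> (\<forall>Y\<in>S. X \<subseteq> Y \<longrightarrow> Y = X)"

definition matroid :: "'e set \<Rightarrow> 'e set set \<Rightarrow> bool" where
  "matroid E \<I> \<longleftrightarrow>
     (\<forall>I\<in>\<I>. I \<subseteq> E) \<and>
     {} \<in> \<I> \<and>
     (\<forall>I\<in>\<I>. \<forall>J. J \<subseteq> I \<longrightarrow> J \<in> \<I>) \<and>
     (\<forall>I\<in>\<I>. \<forall>I'. \<not> maximal_in \<I> I \<and> maximal_in \<I> I' \<longrightarrow>
         (\<exists>x\<in>I' - I. insert x I \<in> \<I>)) \<and>
     (\<forall>I\<in>\<I>. \<forall>X. I \<subseteq> X \<and> X \<subseteq> E \<longrightarrow>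
         (\<exists>J. maximal_in {I'\<in>\<I>. I \<subseteq> I' \<and> I' \<subseteq> X} J))"

definition bases :: "'e set set \<Rightarrow> 'e set set" where
  "bases \<I> = {B. maximal_in \<I> B}"

definition circuits :: "'e set \<Rightarrow> 'e set set \<Rightarrow> 'e set set" where
  "circuits E \<I> = {C. C \<subseteq> E \<and> C \<notin> \<I> \<and> (\<forall>D. D \<subset> C \<longrightarrow> D \<in> \<I>)}"

text \<open>Dual matroid: its bases are the complements of the bases of M,
  so its independent sets are the subsets of such complements.\<close>
definition dual_indep :: "'e set \<Rightarrow> 'e set set \<Rightarrow> 'e set set" where
  "dual_indep E \<I> = {J. \<exists>B\<in>bases \<I>. J \<subseteq> E - B}"

definition cocircuits :: "'e set \<Rightarrow> 'e set set \<Rightarrow> 'e set set" where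
  "cocircuits E \<I> = circuits E (dual_indep E \<I>)"

text \<open>A graph is given by a vertex set V, an edge set E and a map assigning
  to each edge its set of end vertices (one end for a loop, two otherwise).\<close>
definition graph :: "'v set \<Rightarrow> 'e set \<Rightarrow> ('e \<Rightarrow> 'v set) \<Rightarrow> bool" where
  "graph V E ends \<longleftrightarrow> (\<forall>e\<in>E. ends e \<subseteq> V \<and> 1 \<le> card (ends e) \<and> card (ends e) \<le> 2)"

text \<open>Edge set of a finite cycle v_0 e_0 v_1 ... v_{n-1} e_{n-1} v_0 (n \<ge> 1;
  n = 1 gives a loop, n = 2 two parallel edges).\<close>
definition finite_cycle_edges :: "'v set \<Rightarrow> 'e set \<Rightarrow> ('e \<Rightarrow> 'v set) \<Rightarrow> 'e set \<Rightarrow> bool" where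
  "finite_cycle_edges V E ends C \<longleftrightarrow>
     (\<exists>n::nat. \<exists>vs es. n \<ge> 1 \<and> inj_on vs {..<n} \<and> inj_on es {..<n} \<and>
        (\<forall>i<n. vs i \<in> V \<and> es i \<in> E \<and> ends (es i) = {vs i, vs (Suc i mod n)}) \<and>
        C = es ` {..<n})"

definition double_ray_edges :: "'v set \<Rightarrow> 'e set \<Rightarrow> ('e \<Rightarrow> 'v set) \<Rightarrow> 'e set \<Rightarrow> bool" where
  "double_ray_edges V E ends D \<longleftrightarrow>
     (\<exists>vs :: int \<Rightarrow> 'v. \<exists>es :: int \<Rightarrow> 'e. inj vs \<and> inj es \<and>
        (\<forall>i. vs i \<in> V \<and> es i \<in> E \<and> ends (es i) = {vs i, vs (i + 1)}) \<and>
        D = range es)"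

definition elementary_algebraic_cycles :: "'v set \<Rightarrow> 'e set \<Rightarrow> ('e \<Rightarrow> 'v set) \<Rightarrow> 'e set set" where
  "elementary_algebraic_cycles V E ends =
     {C. finite_cycle_edges V E ends C \<or> double_ray_edges V E ends C}"

definition has_ray_in :: "'v set \<Rightarrow> 'e set \<Rightarrow> ('e \<Rightarrow> 'v set) \<Rightarrow> 'v set \<Rightarrow> bool" where
  "has_ray_in V E ends A \<longleftrightarrow>
     (\<exists>vs :: nat \<Rightarrow> 'v. \<exists>es :: nat \<Rightarrow> 'e. inj vs \<and> inj es \<and>
        (\<forall>i. vs i \<in> A \<inter> V \<and> es i \<in> E \<and> ends (es i) = {vs i, vs (Suc i)}))"

definition small_side :: "'v set \<Rightarrow> 'e set \<Rightarrow> ('e \<Rightarrow> 'v set) \<Rightarrow> 'v set \<Rightarrow> bool" where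
  "small_side V E ends A \<longleftrightarrow> \<not> has_ray_in V E ends A"

definition cut_edges :: "'e set \<Rightarrow> ('e \<Rightarrow> 'v set) \<Rightarrow> 'v set \<Rightarrow> 'v set \<Rightarrow> 'e set" where
  "cut_edges E ends A B = {e\<in>E. ends e \<inter> A \<noteq> {} \<and> ends e \<inter> B \<noteq> {}}"

definition is_cut :: "'v set \<Rightarrow> 'e set \<Rightarrow> ('e \<Rightarrow> 'v set) \<Rightarrow> 'e set \<Rightarrow> bool" where
  "is_cut V E ends F \<longleftrightarrow>
     (\<exists>A B. A \<union> B = V \<and> A \<inter> B = {} \<and> F = cut_edges E ends A B)"

definition cut_with_small_side :: "'v set \<Rightarrow> 'e set \<Rightarrow> ('e \<Rightarrow> 'v set) \<Rightarrow> 'e set \<Rightarrow> bool" where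
  "cut_with_small_side V E ends F \<longleftrightarrow>
     (\<exists>A B. A \<union> B = V \<and> A \<inter> B = {} \<and> F = cut_edges E ends A B \<and>
        (small_side V E ends A \<or> small_side V E ends B))"

definition skew_cut :: "'v set \<Rightarrow> 'e set \<Rightarrow> ('e \<Rightarrow> 'v set) \<Rightarrow> 'e set \<Rightarrow> bool" where
  "skew_cut V E ends F \<longleftrightarrow>
     F \<noteq> {} \<and> cut_with_small_side V E ends F \<and>
     (\<forall>F'. F' \<subset> F \<and> F' \<noteq> {} \<and> is_cut V E ends F' \<longrightarrow>
        \<not> cut_with_small_side V E ends F')"

end

theory Submission
  imports Defs
begin

text \<open>A set is dependent in the dual matroid iff it meets every basis, so the cocircuits
  are the minimal sets meeting every basis.

  A non-empty cut with a small side meets every basis: otherwise the fundamental circuit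
  of one of its edges would cross the cut in that edge only, so it would be a double ray
  with a tail on either side of the cut.

  Conversely, let D be a cocircuit. By orthogonality with the finite cycles, the two ends
  of every edge of D are distinct and not connected in E - D. If some such end has a
  rayless component in E - D, the cut around that component has a small side and lies in
  D, hence equals D by minimality. Otherwise pick a ray in each of these components and
  extend their union to a maximal independent subset J of E - D. Every end of an edge of
  D then starts a ray in J, the rays from the two ends of an edge f of D are disjoint, and
  together with f they form a double ray. Hence J is a basis disjoint from D, which is
  impossible.\<close>

section \<open>Matroids given by independent sets\<close>

locale matroid_indep =
  fixes E :: "'e set" and I :: "'e set set"
  assumes matroid: "matroid E I"
begin

lemma matroid_conditions:
  "\<forall>X\<in>I. X \<subseteq> E"
  "{} \<in> I"
  "\<forall>X\<in>I. \<forall>Y. Y \<subseteq> X \<longrightarrow> Y \<in> I"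
  "\<forall>X\<in>I. \<forall>B. \<not> maximal_in I X \<and> maximal_in I B \<longrightarrow> (\<exists>x\<in>B - X. insert x X \<in> I)"
  "\<forall>X\<in>I. \<forall>Y. X \<subseteq> Y \<and> Y \<subseteq> E \<longrightarrow> (\<exists>J. maximal_in {I'\<in>I. X \<subseteq> I' \<and> I' \<subseteq> Y} J)"
  using matroid unfolding matroid_def
  by - (elim conjE, assumption)+

lemma indep_subset_ground: "X \<in> I \<Longrightarrow> X \<subseteq> E"
  using matroid_conditions(1) by blast

lemma empty_indep: "{} \<in> I"
  by (fact matroid_conditions(2))

lemma indep_subset: "X \<in> I \<Longrightarrow> Y \<subseteq> X \<Longrightarrow> Y \<in> I"
  using matroid_conditions(3) by blast

lemma indep_augment:
  "X \<in> I \<Longrightarrow> \<not> maximal_in I X \<Longrightarrow> maximal_in I B \<Longrightarrow> \<exists>x\<in>B - X. insert x X \<in> I"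
  using matroid_conditions(4) by blast

lemma indep_maximal_extension:
  assumes "X \<in> I" "X \<subseteq> Y" "Y \<subseteq> E"
  shows "\<exists>J. J \<in> I \<and> X \<subseteq> J \<and> J \<subseteq> Y \<and> (\<forall>z\<in>Y - J. insert z J \<notin> I)"
proof -
  obtain J where J: "maximal_in {I'\<in>I. X \<subseteq> I' \<and> I' \<subseteq> Y} J"
    using matroid_conditions(5) assms by blast
  then have "\<forall>z\<in>Y - J. insert z J \<notin> I"
    unfolding maximal_in_def by blast
  with J show ?thesis
    unfolding maximal_in_def by blast
qed

lemma basis_indep: "maximal_in I B \<Longrightarrow> B \<in> I"
  unfolding maximal_in_def by auto

lemma basis_subset_ground: "maximal_in I B \<Longrightarrow> B \<subseteq> E"
  using basis_indep indep_subset_ground by blast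

lemma basis_insert_not_indep: "maximal_in I B \<Longrightarrow> x \<notin> B \<Longrightarrow> insert x B \<notin> I"
  unfolding maximal_in_def by blast

lemma maximal_in_if_insert_not_indep:
  assumes "J \<in> I" "\<forall>z\<in>E - J. insert z J \<notin> I"
  shows "maximal_in I J"
  unfolding maximal_in_def
proof (intro conjI ballI impI)
  fix Y assume Y: "Y \<in> I" "J \<subseteq> Y"
  show "Y = J"
  proof (rule ccontr)
    assume "Y \<noteq> J"
    then obtain z where "z \<in> Y - J" using Y by auto
    then have "insert z J \<subseteq> Y" "z \<in> E - J"
      using Y indep_subset_ground by auto
    then show False
      using assms(2) indep_subset[OF Y(1)] by blast
  qed
qed (fact assms(1))

lemma maximal_indep_in_superset_of_basis:
  assumes "J \<in> I" "J \<subseteq> Y" "\<forall>z\<in>Y - J. insert z J \<notin> I" "maximal_in I B" "B \<subseteq> Y"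
  shows "maximal_in I J"
proof (rule ccontr)
  assume "\<not> maximal_in I J"
  then obtain x where "x \<in> B - J" "insert x J \<in> I"
    using indep_augment assms by blast
  then show False using assms by auto
qed

lemma indep_extends_to_basis:
  assumes "X \<in> I"
  shows "\<exists>B. maximal_in I B \<and> X \<subseteq> B"
  using indep_maximal_extension[OF assms indep_subset_ground[OF assms] order.refl]
    maximal_in_if_insert_not_indep by blast

lemma basis_exists: "\<exists>B. maximal_in I B"
  using indep_extends_to_basis[OF empty_indep] by blast

lemma basis_exchange:
  assumes K: "maximal_in I K" and "x \<in> K" "f \<notin> K" "insert f (K - {x}) \<in> I"
  shows "maximal_in I (insert f (K - {x}))"
proof (rule ccontr)
  assume "\<not> maximal_in I (insert f (K - {x}))"
  then obtain y where y: "y \<in> K - insert f (K - {x})" "insert y (insert f (K - {x})) \<in> I"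
    using indep_augment assms by blast
  then have "insert f K \<in> I"
    using assms by (metis Diff_iff insert_Diff insert_commute insert_iff)
  then show False using basis_insert_not_indep[OF K] assms by auto
qed

lemma circuit_not_indep: "C \<in> circuits E I \<Longrightarrow> C \<notin> I"
  unfolding circuits_def by auto

lemma circuit_subset_ground: "C \<in> circuits E I \<Longrightarrow> C \<subseteq> E"
  unfolding circuits_def by auto

lemma superset_of_circuit_not_indep: "C \<in> circuits E I \<Longrightarrow> C \<subseteq> X \<Longrightarrow> X \<notin> I"
  using circuit_not_indep indep_subset by blast

lemma circuit_minus_indep: "C \<in> circuits E I \<Longrightarrow> x \<in> C \<Longrightarrow> C - {x} \<in> I"
  unfolding circuits_def by auto

lemma fundamental_circuit:
  assumes B: "maximal_in I B" and x: "x \<in> E" "x \<notin> B"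
  shows "\<exists>C\<in>circuits E I. x \<in> C \<and> C \<subseteq> insert x B \<and>
    (\<forall>b\<in>C - {x}. insert x (B - {b}) \<in> I)"
proof -
  define C where "C = insert x {b\<in>B. insert x (B - {b}) \<in> I}"
  have "C \<notin> I"
  proof
    assume CI: "C \<in> I"
    have "C \<subseteq> insert x B" "insert x B \<subseteq> E"
      using x basis_subset_ground[OF B] unfolding C_def by auto
    then obtain J where J: "J \<in> I" "C \<subseteq> J" "J \<subseteq> insert x B"
        "\<forall>z\<in>insert x B - J. insert z J \<notin> I"
      using indep_maximal_extension[OF CI, of "insert x B"] by blast
    have JB: "maximal_in I J"
      using maximal_indep_in_superset_of_basis[OF J(1,3,4) B] by auto
    have "J \<noteq> insert x B" using J(1) basis_insert_not_indep[OF B x(2)] by auto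
    then obtain b where b: "b \<in> B" "b \<noteq> x" "b \<notin> J"
      using J(2,3) unfolding C_def by auto
    have "B - {b} \<in> I"
      using indep_subset basis_indep[OF B] by blast
    moreover have "\<not> maximal_in I (B - {b})"
      using B b unfolding maximal_in_def by blast
    ultimately obtain y where y: "y \<in> J - (B - {b})" "insert y (B - {b}) \<in> I"
      using indep_augment[OF _ _ JB] by blast
    then have "y = x" using J(3) b by auto
    then have "b \<in> C" using y b unfolding C_def by auto
    then show False using J(2) b by auto
  qed
  moreover have "D \<in> I" if D: "D \<subset> C" for D
  proof -
    obtain z where z: "z \<in> C" "z \<notin> D" using D by auto
    show ?thesis
    proof (cases "z = x")
      case True
      then have "D \<subseteq> B" using D z unfolding C_def by auto
      then show ?thesis using indep_subset basis_indep[OF B] by blast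
    next
      case False
      then have "insert x (B - {z}) \<in> I" "D \<subseteq> insert x (B - {z})"
        using D z unfolding C_def by auto
      then show ?thesis using indep_subset by blast
    qed
  qed
  moreover have "C \<subseteq> E" using x basis_subset_ground[OF B] unfolding C_def by auto
  ultimately have "C \<in> circuits E I" unfolding circuits_def by auto
  moreover have "x \<in> C \<and> C \<subseteq> insert x B \<and> (\<forall>b\<in>C - {x}. insert x (B - {b}) \<in> I)"
    unfolding C_def by auto
  ultimately show ?thesis by blast
qed

lemma dependent_contains_circuit:
  assumes "X \<subseteq> E" "X \<notin> I"
  shows "\<exists>C\<in>circuits E I. C \<subseteq> X"
proof -
  obtain J where J: "J \<in> I" "J \<subseteq> X" "\<forall>z\<in>X - J. insert z J \<notin> I"
    using indep_maximal_extension[OF empty_indep _ assms(1)] by auto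
  have "J \<noteq> X" using J assms by auto
  then obtain x where x: "x \<in> X" "x \<notin> J" using J by auto
  then have xJ: "insert x J \<notin> I" using J by auto
  obtain B where B: "maximal_in I B" "J \<subseteq> B" using indep_extends_to_basis J by blast
  have "x \<notin> B" using xJ B indep_subset basis_indep by (metis insert_subset)
  then obtain C where C: "C \<in> circuits E I" "x \<in> C" "C \<subseteq> insert x B"
      "\<forall>b\<in>C - {x}. insert x (B - {b}) \<in> I"
    using fundamental_circuit[OF B(1)] x assms by blast
  have "C \<subseteq> insert x J"
  proof
    fix b assume b: "b \<in> C"
    show "b \<in> insert x J"
    proof (rule ccontr)
      assume nb: "b \<notin> insert x J"
      then have "insert x (B - {b}) \<in> I" "insert x J \<subseteq> insert x (B - {b})"
        using C b B by auto
      then show False using xJ indep_subset by blast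
    qed
  qed
  then show ?thesis using C(1) x(1) J(2) by blast
qed

definition meets_all_bases :: "'e set \<Rightarrow> bool" where
  "meets_all_bases D \<longleftrightarrow> (\<forall>B. maximal_in I B \<longrightarrow> D \<inter> B \<noteq> {})"

lemma cocircuit_iff:
  "D \<in> cocircuits E I \<longleftrightarrow>
     D \<subseteq> E \<and> meets_all_bases D \<and> (\<forall>S. S \<subset> D \<longrightarrow> \<not> meets_all_bases S)"
proof -
  have dual_dep: "X \<subseteq> E \<Longrightarrow> X \<notin> dual_indep E I \<longleftrightarrow> meets_all_bases X" for X
    unfolding dual_indep_def bases_def meets_all_bases_def by auto
  have "D \<in> cocircuits E I \<longleftrightarrow>
      D \<subseteq> E \<and> D \<notin> dual_indep E I \<and> (\<forall>S. S \<subset> D \<longrightarrow> S \<in> dual_indep E I)"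
    unfolding cocircuits_def circuits_def by auto
  with dual_dep show ?thesis by (meson order.trans less_imp_le)
qed

lemma meets_all_bases_nonempty: "meets_all_bases D \<Longrightarrow> D \<noteq> {}"
  using basis_exists unfolding meets_all_bases_def by blast

lemma fundamental_cocircuit:
  assumes K: "maximal_in I K" and xK: "x \<in> K"
  shows "insert x {f\<in>E - K. insert f (K - {x}) \<in> I} \<in> cocircuits E I"
    (is "?C \<in> _")
proof -
  have "meets_all_bases ?C" unfolding meets_all_bases_def
  proof (intro allI impI notI)
    fix B assume B: "maximal_in I B" and CB: "?C \<inter> B = {}"
    have "K - {x} \<in> I"
      using indep_subset basis_indep[OF K] by blast
    moreover have "\<not> maximal_in I (K - {x})"
      using K xK unfolding maximal_in_def by blast
    ultimately obtain y where y: "y \<in> B - (K - {x})" "insert y (K - {x}) \<in> I"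
      using indep_augment B by blast
    then have "y \<in> ?C" using CB basis_subset_ground[OF B] by auto
    then show False using CB y by auto
  qed
  moreover have "\<not> meets_all_bases S" if S: "S \<subset> ?C" for S
  proof -
    obtain z where z: "z \<in> ?C" "z \<notin> S" using S by auto
    show ?thesis
    proof (cases "z = x")
      case True
      then have "S \<inter> K = {}" using S z by auto
      then show ?thesis using K unfolding meets_all_bases_def by auto
    next
      case False
      then have "maximal_in I (insert z (K - {x}))"
        using basis_exchange[OF K xK] z by auto
      moreover have "S \<inter> insert z (K - {x}) = {}" using S z by auto
      ultimately show ?thesis unfolding meets_all_bases_def by auto
    qed
  qed
  moreover have "?C \<subseteq> E" using xK basis_subset_ground[OF K] by auto
  ultimately show ?thesis using cocircuit_iff by auto
qed

text \<open>With J maximal independent in E - S and x \<in> S such that J + x is independent,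
  the fundamental cocircuit of x with respect to a basis containing J + x lies in S.\<close>
lemma meets_all_bases_contains_cocircuit:
  assumes S: "S \<subseteq> E" "meets_all_bases S"
  shows "\<exists>D\<in>cocircuits E I. D \<subseteq> S"
proof -
  obtain J where J: "J \<in> I" "J \<subseteq> E - S" "\<forall>z\<in>(E - S) - J. insert z J \<notin> I"
    using indep_maximal_extension[OF empty_indep, of "E - S"] by blast
  obtain B0 where "maximal_in I B0" using basis_exists by blast
  moreover have "\<not> maximal_in I J" using S J unfolding meets_all_bases_def by blast
  ultimately obtain x where x: "x \<in> B0 - J" "insert x J \<in> I"
    using indep_augment J by blast
  have xS: "x \<in> S" using x J indep_subset_ground by auto
  obtain K where K: "maximal_in I K" "insert x J \<subseteq> K"
    using indep_extends_to_basis x by blast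
  have "insert x {f\<in>E - K. insert f (K - {x}) \<in> I} \<subseteq> S"
  proof
    fix f assume f: "f \<in> insert x {f\<in>E - K. insert f (K - {x}) \<in> I}"
    show "f \<in> S"
    proof (rule ccontr)
      assume "f \<notin> S"
      then have "f \<in> (E - S) - J" "insert f (K - {x}) \<in> I" "insert f J \<subseteq> insert f (K - {x})"
        using f xS K x by auto
      then show False using J(3) indep_subset by blast
    qed
  qed
  moreover have "x \<in> K" using K by auto
  ultimately show ?thesis using fundamental_cocircuit[OF K(1)] by blast
qed

text \<open>Take a basis B missing D - f and extend C - f to a basis J inside B \<union> C;
  J misses D.\<close>
lemma circuit_cocircuit_inter_not_singleton:
  assumes D: "D \<in> cocircuits E I" and C: "C \<in> circuits E I"
  shows "C \<inter> D \<noteq> {f}"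
proof
  assume CD: "C \<inter> D = {f}"
  have D': "meets_all_bases D" "\<forall>S. S \<subset> D \<longrightarrow> \<not> meets_all_bases S"
    using D cocircuit_iff by auto
  moreover have "D - {f} \<subset> D" using CD by auto
  ultimately have "\<not> meets_all_bases (D - {f})" by blast
  then obtain B where B: "maximal_in I B" "(D - {f}) \<inter> B = {}"
    unfolding meets_all_bases_def by blast
  have "B \<union> C \<subseteq> E"
    using circuit_subset_ground[OF C] basis_subset_ground[OF B(1)] by auto
  moreover have "C - {f} \<in> I"
    using C CD circuit_minus_indep by blast
  ultimately obtain J where J: "J \<in> I" "C - {f} \<subseteq> J" "J \<subseteq> B \<union> C"
      "\<forall>z\<in>(B \<union> C) - J. insert z J \<notin> I"
    using indep_maximal_extension[of "C - {f}" "B \<union> C"] by blast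
  have "maximal_in I J"
    using maximal_indep_in_superset_of_basis[OF J(1,3,4) B(1)] by auto
  moreover have "f \<notin> J"
  proof
    assume "f \<in> J"
    then have "C \<subseteq> J" using J(2) by auto
    then show False using J(1) C superset_of_circuit_not_indep by blast
  qed
  then have "D \<inter> J = {}"
  proof (intro equalityI subsetI)
    fix z assume z: "z \<in> D \<inter> J"
    then have "z \<noteq> f" using \<open>f \<notin> J\<close> by auto
    moreover have "z \<in> B \<or> z \<in> C" using z J(3) by auto
    ultimately show "z \<in> {}" using z B(2) CD by auto
  qed auto
  ultimately show False
    using D'(1) unfolding meets_all_bases_def by blast
qed

end

section \<open>Rays, walks and elementary cycles in a multigraph\<close>

lemma cyclic_sequence_no_single_change:
  fixes P :: "'a \<Rightarrow> bool"
  assumes k: "k < n"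
    and same: "\<forall>i<n. i \<noteq> k \<longrightarrow> P (vs i) = P (vs (Suc i mod n))"
  shows "P (vs k) = P (vs (Suc k mod n))"
proof -
  have "P (vs ((Suc k + j) mod n)) = P (vs (Suc k mod n))" if "j < n" for j
    using that
  proof (induction j)
    case (Suc j)
    define i where "i = (Suc k + j) mod n"
    have "i < n" using k unfolding i_def by auto
    moreover have "i \<noteq> k"
    proof (cases "Suc k + j < n")
      case False
      then have "i = Suc k + j - n"
        using Suc.prems k unfolding i_def by (simp add: le_mod_geq)
      then show ?thesis using Suc.prems False by arith
    qed (simp add: i_def)
    moreover have "Suc i mod n = (Suc k + Suc j) mod n"
      unfolding i_def by (simp add: mod_Suc_eq)
    ultimately show ?case
      using Suc same unfolding i_def by (metis Suc_lessD)
  qed simp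
  from this[of "n - 1"] show ?thesis
    using k by simp
qed

lemma exists_index_predicate_lost:
  "P (p 0) \<Longrightarrow> \<not> P (p m) \<Longrightarrow> \<exists>i<m. P (p i) \<and> \<not> P (p (Suc i))"
  by (induction m) (auto, metis less_Suc_eq)

lemma inj_sequence_append:
  fixes m :: nat
  assumes p: "inj_on p {..m}" and w: "inj w"
    and disjoint: "\<forall>i<m. p i \<notin> range w" and joint: "p m = w 0"
  shows "inj (\<lambda>n. if n \<le> m then p n else w (n - m))" (is "inj ?w")
proof (rule injI)
  fix a b assume ab: "?w a = ?w b"
  have cross: "?w a \<noteq> ?w b" if "a \<le> m" "m < b" for a b
  proof (cases "a = m")
    case True
    then show ?thesis using that joint w by (simp add: inj_eq)
  next
    case False
    then have "p a \<notin> range w" using that disjoint by auto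
    then show ?thesis using that by auto
  qed
  show "a = b"
  proof (cases "a \<le> m"; cases "b \<le> m")
    assume "a \<le> m" "b \<le> m"
    then show ?thesis using ab p unfolding inj_on_def by auto
  next
    assume "\<not> a \<le> m" "\<not> b \<le> m"
    then show ?thesis using ab w by (simp add: inj_eq)
  qed (use ab cross in \<open>metis not_le\<close>)+
qed

locale multigraph =
  fixes V :: "'v set" and E :: "'e set" and ends :: "'e \<Rightarrow> 'v set"
  assumes graph: "graph V E ends"
begin

lemma ends_subset: "e \<in> E \<Longrightarrow> ends e \<subseteq> V"
  using graph unfolding graph_def by blast

lemma ends_cases:
  assumes "e \<in> E"
  obtains a b where "ends e = {a, b}"
proof -
  have "card (ends e) = 1 \<or> card (ends e) = 2"
    using graph assms unfolding graph_def by fastforce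
  then show thesis
    by (metis card_1_singletonE card_2_iff insert_absorb2 that)
qed

lemma cut_edges_iff:
  assumes "A \<union> B = V" "A \<inter> B = {}" "e \<in> E" "ends e = {a, b}"
  shows "e \<in> cut_edges E ends A B \<longleftrightarrow> (a \<in> A) \<noteq> (b \<in> A)"
  using assms ends_subset[OF assms(3)] unfolding cut_edges_def by auto

lemma elementary_algebraic_cycleE:
  assumes "C \<in> elementary_algebraic_cycles V E ends"
  obtains (finite) n vs es where "n \<ge> 1" "inj_on vs {..<n}" "inj_on es {..<n}"
      "\<forall>i<n. vs i \<in> V \<and> es i \<in> E \<and> ends (es i) = {vs i, vs (Suc i mod n)}" "C = es ` {..<n}"
  | (double_ray) vs es where "inj vs" "inj es"
      "\<forall>i::int. vs i \<in> V \<and> es i \<in> E \<and> ends (es i) = {vs i, vs (i + 1)}" "C = range es"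
  using assms unfolding elementary_algebraic_cycles_def finite_cycle_edges_def double_ray_edges_def
  by blast

definition ray_in :: "'e set \<Rightarrow> 'v set \<Rightarrow> (nat \<Rightarrow> 'v) \<Rightarrow> (nat \<Rightarrow> 'e) \<Rightarrow> bool" where
  "ray_in S A w r \<longleftrightarrow> inj w \<and> inj r \<and> (\<forall>i. w i \<in> A \<and> r i \<in> S \<and> ends (r i) = {w i, w (Suc i)})"

lemma has_ray_in_iff: "has_ray_in V E ends A \<longleftrightarrow> (\<exists>w r. ray_in E (A \<inter> V) w r)"
  unfolding has_ray_in_def ray_in_def by auto

lemma ray_in_mono: "ray_in S A w r \<Longrightarrow> S \<subseteq> S' \<Longrightarrow> A \<subseteq> A' \<Longrightarrow> ray_in S' A' w r"
  unfolding ray_in_def by blast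

lemma ray_in_shift:
  assumes "ray_in S A w r"
  shows "ray_in S A (\<lambda>n. w (j + n)) (\<lambda>n. r (j + n))"
proof -
  have "inj w" "inj r" using assms unfolding ray_in_def by auto
  then have "inj (\<lambda>n. w (j + n))" "inj (\<lambda>n. r (j + n))"
    by (auto intro!: injI simp: inj_eq)
  then show ?thesis using assms unfolding ray_in_def by auto
qed

lemma double_ray_forward_tail:
  assumes "inj vs" "inj es" "\<forall>i. ends (es i) = {vs i, vs (i + 1)}"
  shows "ray_in (range es - {es k}) (range vs)
           (\<lambda>n. vs (k + 1 + int n)) (\<lambda>n. es (k + 1 + int n))"
proof -
  have "inj (\<lambda>n. vs (k + 1 + int n))" "inj (\<lambda>n. es (k + 1 + int n))"
    using assms(1,2) by (auto intro!: injI simp: inj_eq)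
  moreover have "es (k + 1 + int n) \<noteq> es k" for n
    using assms(2) by (simp add: inj_eq)
  ultimately show ?thesis
    using assms(3) unfolding ray_in_def by (auto simp: add.assoc)
qed

lemma double_ray_backward_tail:
  assumes "inj vs" "inj es" "\<forall>i. ends (es i) = {vs i, vs (i + 1)}"
  shows "ray_in (range es - {es k}) (range vs)
           (\<lambda>n. vs (k - int n)) (\<lambda>n. es (k - 1 - int n))"
proof -
  have "inj (\<lambda>n. vs (k - int n))" "inj (\<lambda>n. es (k - 1 - int n))"
    using assms(1,2) by (auto intro!: injI simp: inj_eq)
  moreover have "es (k - 1 - int n) \<noteq> es k" for n
    using assms(2) by (simp add: inj_eq)
  moreover have "ends (es (k - 1 - int n)) = {vs (k - int n), vs (k - int (Suc n))}" for n
    using assms(3) by (auto simp: algebra_simps insert_commute)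
  ultimately show ?thesis
    using assms(3) unfolding ray_in_def by auto
qed

lemma ray_in_side:
  assumes R: "ray_in S A w r" and "S \<subseteq> E" "P (w 0)"
    and same: "\<And>e a b. e \<in> S \<Longrightarrow> ends e = {a, b} \<Longrightarrow> P a = P b"
  shows "ray_in S ({z. P z} \<inter> V) w r"
proof -
  have edges: "r n \<in> S" "ends (r n) = {w n, w (Suc n)}" for n
    using R unfolding ray_in_def by auto
  have "P (w n)" for n
    by (induction n) (use assms(3) same edges in blast)+
  moreover have "w n \<in> V" for n
    using edges(1,2)[of n] assms(2) ends_subset by blast
  ultimately show ?thesis
    using R unfolding ray_in_def by auto
qed

text \<open>An elementary cycle that crosses a bipartition of the vertices in a single edge g
  must be a double ray, and its two tails are rays on the two sides.\<close>
lemma elementary_cycle_single_crossing: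
  fixes P :: "'v \<Rightarrow> bool"
  assumes C: "C \<in> elementary_algebraic_cycles V E ends" and g: "g \<in> C"
    and same: "\<And>e a b. e \<in> C \<Longrightarrow> e \<noteq> g \<Longrightarrow> ends e = {a, b} \<Longrightarrow> P a = P b"
    and cross: "ends g = {a0, b0}" "P a0 \<noteq> P b0"
  shows "(\<exists>w r. ray_in (C - {g}) ({z. P z} \<inter> V) w r) \<and>
         (\<exists>w r. ray_in (C - {g}) ({z. \<not> P z} \<inter> V) w r)"
proof -
  have g_cross: "ends g = {a, b} \<Longrightarrow> P a \<noteq> P b" for a b
    using cross by (auto simp: doubleton_eq_iff)
  from C show ?thesis
  proof (cases rule: elementary_algebraic_cycleE)
    case (finite n vs es)
    then have cyc: "inj_on es {..<n}"
      "\<forall>i<n. es i \<in> E \<and> ends (es i) = {vs i, vs (Suc i mod n)}" "C = es ` {..<n}"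
      by auto
    obtain k where k: "k < n" "es k = g" using g cyc(3) by blast
    have "\<forall>i<n. i \<noteq> k \<longrightarrow> P (vs i) = P (vs (Suc i mod n))"
    proof (intro allI impI)
      fix i assume i: "i < n" "i \<noteq> k"
      then have "es i \<noteq> g" using cyc(1) k unfolding inj_on_def by auto
      then show "P (vs i) = P (vs (Suc i mod n))" using same[of "es i"] cyc(2,3) i by auto
    qed
    then have "P (vs k) = P (vs (Suc k mod n))"
      using cyclic_sequence_no_single_change[OF k(1)] by blast
    then show ?thesis using g_cross cyc(2) k by auto
  next
    case (double_ray vs es)
    then have dr: "inj vs" "inj es" "\<forall>i. ends (es i) = {vs i, vs (i + 1)}" "C = range es"
      and "C - {g} \<subseteq> E"
      by auto
    obtain k where k: "es k = g" using g dr(4) by blast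
    have side: "ray_in (C - {g}) ({z. P z = P (w 0)} \<inter> V) w r"
      if "ray_in (C - {g}) (range vs) w r" for w r
      using that \<open>C - {g} \<subseteq> E\<close> by (rule ray_in_side) (auto dest: same)
    have "ray_in (C - {g}) ({z. P z = P (vs k)} \<inter> V) (\<lambda>n. vs (k - int n)) (\<lambda>n. es (k - 1 - int n))"
      using side[OF double_ray_backward_tail[OF dr(1-3), of k, folded dr(4), unfolded k]] by simp
    moreover have "ray_in (C - {g}) ({z. P z = P (vs (k + 1))} \<inter> V)
        (\<lambda>n. vs (k + 1 + int n)) (\<lambda>n. es (k + 1 + int n))"
      using side[OF double_ray_forward_tail[OF dr(1-3), of k, folded dr(4), unfolded k]] by simp
    moreover have "P (vs k) \<noteq> P (vs (k + 1))" using g_cross dr(3) k by auto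
    ultimately show ?thesis
      by (cases "P (vs k)") (auto simp: Collect_neg_eq[symmetric])
  qed
qed

definition adj :: "'e set \<Rightarrow> 'v \<Rightarrow> 'v \<Rightarrow> bool" where
  "adj S a b \<longleftrightarrow> (\<exists>g\<in>S. ends g = {a, b})"

abbreviation reach :: "'e set \<Rightarrow> 'v \<Rightarrow> 'v \<Rightarrow> bool" where
  "reach S \<equiv> (adj S)\<^sup>*\<^sup>*"

definition walk :: "'e set \<Rightarrow> nat \<Rightarrow> (nat \<Rightarrow> 'v) \<Rightarrow> (nat \<Rightarrow> 'e) \<Rightarrow> bool" where
  "walk S m p q \<longleftrightarrow> (\<forall>i<m. q i \<in> S \<and> ends (q i) = {p i, p (Suc i)})"

lemma adj_sym: "adj S a b \<Longrightarrow> adj S b a"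
  unfolding adj_def by (auto simp: insert_commute)

lemma reach_sym: "reach S x y \<Longrightarrow> reach S y x"
  using symp_rtranclp[of "adj S"] adj_sym by (metis sympD sympI)

lemma reach_mono: "reach S x y \<Longrightarrow> S \<subseteq> S' \<Longrightarrow> reach S' x y"
  using rtranclp_mono[of "adj S" "adj S'"] unfolding adj_def by blast

lemma walk_of_reach: "reach S x y \<Longrightarrow> \<exists>m p q. walk S m p q \<and> p 0 = x \<and> p m = y"
proof (induction rule: rtranclp_induct)
  case base
  have "walk S 0 (\<lambda>_. x) q" for q unfolding walk_def by simp
  then show ?case by blast
next
  case (step y z)
  obtain m p q where W: "walk S m p q" "p 0 = x" "p m = y" using step.IH by blast
  obtain g where "g \<in> S" "ends g = {y, z}" using step.hyps(2) unfolding adj_def by blast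
  then have "walk S (Suc m) (p(Suc m := z)) (q(m := g))"
    using W unfolding walk_def by (auto simp: less_Suc_eq)
  then show ?case using W by force
qed

text \<open>Cutting out the closed subwalk between two visits i < j of the same vertex.\<close>
lemma walk_shortcut:
  assumes W: "walk S m p q" and ij: "i < j" "j \<le> m" "p i = p j"
  shows "walk S (m - (j - i)) (\<lambda>k. if k \<le> i then p k else p (k + (j - i)))
           (\<lambda>k. if k < i then q k else q (k + (j - i)))"
  unfolding walk_def
proof (intro allI impI)
  fix k assume k: "k < m - (j - i)"
  show "(if k < i then q k else q (k + (j - i))) \<in> S \<and>
      ends (if k < i then q k else q (k + (j - i))) =
      {if k \<le> i then p k else p (k + (j - i)), if Suc k \<le> i then p (Suc k) else p (Suc k + (j - i))}"
  proof (cases "k < i")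
    case True
    then show ?thesis using W ij k unfolding walk_def by auto
  next
    case False
    then have "k + (j - i) < m" using k ij by auto
    then show ?thesis using W ij False unfolding walk_def by auto
  qed
qed

lemma shortest_walk_to_set:
  assumes "walk S m p q" "p 0 = x" "p m \<in> T"
  shows "\<exists>m p q. walk S m p q \<and> p 0 = x \<and> p m \<in> T \<and> inj_on p {..m} \<and> (\<forall>i<m. p i \<notin> T)"
proof -
  define P where "P m \<longleftrightarrow> (\<exists>p q. walk S m p q \<and> p 0 = x \<and> p m \<in> T)" for m
  have "P m" using assms unfolding P_def by blast
  define m0 where "m0 = (LEAST m. P m)"
  have "P m0" unfolding m0_def by (rule LeastI) fact
  then obtain p q where W: "walk S m0 p q" "p 0 = x" "p m0 \<in> T" unfolding P_def by blast
  have shorter: "\<not> P k" if "k < m0" for k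
    using that unfolding m0_def by (rule not_less_Least)
  have "p i \<notin> T" if "i < m0" for i
  proof
    assume "p i \<in> T"
    moreover have "walk S i p q" using W(1) that unfolding walk_def by auto
    ultimately show False using shorter[OF that] W(2) unfolding P_def by blast
  qed
  moreover have "inj_on p {..m0}"
  proof (rule ccontr)
    assume "\<not> inj_on p {..m0}"
    then obtain i j where ij: "i < j" "j \<le> m0" "p i = p j"
      unfolding inj_on_def by (metis atMost_iff linorder_neqE_nat)
    define p' where "p' k = (if k \<le> i then p k else p (k + (j - i)))" for k
    have "p' (m0 - (j - i)) = p m0"
      using ij unfolding p'_def by (cases "j = m0") auto
    moreover have "p' 0 = x" using W(2) unfolding p'_def by auto
    ultimately have "P (m0 - (j - i))"
      using walk_shortcut[OF W(1) ij, folded p'_def] W(3) unfolding P_def by metis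
    then show False using shorter ij by auto
  qed
  ultimately show ?thesis using W by blast
qed

lemma path_edges_inj:
  assumes W: "walk S m p q" and inj: "inj_on p {..m}"
  shows "inj_on q {..<m}"
proof (rule inj_onI)
  fix a b assume ab: "a \<in> {..<m}" "b \<in> {..<m}" "q a = q b"
  then have "{p a, p (Suc a)} = {p b, p (Suc b)}"
    using W unfolding walk_def by (metis lessThan_iff)
  then have "(p a = p b \<and> p (Suc a) = p (Suc b)) \<or> (p a = p (Suc b) \<and> p (Suc a) = p b)"
    by (simp add: doubleton_eq_iff)
  moreover have "p a = p b \<Longrightarrow> a = b" "p a = p (Suc b) \<Longrightarrow> a = Suc b" "p (Suc a) = p b \<Longrightarrow> Suc a = b"
    using inj ab(1,2) unfolding inj_on_def by auto
  ultimately show "a = b" by auto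
qed

lemma reach_along_ray: "ray_in S A w r \<Longrightarrow> reach S (w 0) (w n)"
proof (induction n)
  case (Suc n)
  then have "adj S (w n) (w (Suc n))" unfolding ray_in_def adj_def by blast
  with Suc show ?case by (simp add: rtranclp.rtrancl_into_rtrancl)
qed simp

lemma ray_prepend_path:
  assumes W: "walk S m p q" "inj_on p {..m}" "\<forall>i<m. p i \<notin> range w" "p m = w 0"
    and R: "ray_in S A w r"
  shows "ray_in S UNIV (\<lambda>n. if n \<le> m then p n else w (n - m))
                        (\<lambda>n. if n < m then q n else r (n - m))"
    (is "ray_in S UNIV ?w ?r")
proof -
  have Rr: "inj w" "inj r" "\<And>i. r i \<in> S" "\<And>i. ends (r i) = {w i, w (Suc i)}"
    using R unfolding ray_in_def by auto
  have w_tail: "n \<ge> m \<Longrightarrow> ?w n = w (n - m)" for n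
    using W(4) by auto
  have edges: "?r n \<in> S \<and> ends (?r n) = {?w n, ?w (Suc n)}" for n
  proof (cases "n < m")
    case True
    then show ?thesis using W(1) unfolding walk_def by auto
  next
    case False
    then have "Suc n - m = Suc (n - m)" by auto
    then show ?thesis using False Rr(3,4) w_tail[of n] w_tail[of "Suc n"] by auto
  qed
  have "inj ?w" using inj_sequence_append[OF W(2) Rr(1) W(3,4)] .
  moreover have "inj ?r"
  proof (rule injI)
    fix a b assume ab: "?r a = ?r b"
    have cross: "?r a \<noteq> ?r b" if "a < m" "\<not> b < m" for a b
    proof
      assume "?r a = ?r b"
      then have "p a \<in> ends (r (b - m))" using that W(1) unfolding walk_def by auto
      then show False using Rr(4) W(3) that by auto
    qed
    show "a = b"
    proof (cases "a < m"; cases "b < m")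
      assume "a < m" "b < m"
      then show ?thesis using ab path_edges_inj[OF W(1,2)] unfolding inj_on_def by auto
    next
      assume "\<not> a < m" "\<not> b < m"
      then show ?thesis using ab Rr(2) by (simp add: inj_eq)
    qed (use ab cross in metis)+
  qed
  ultimately show ?thesis unfolding ray_in_def using edges by blast
qed

lemma ray_from_reachable:
  assumes R: "ray_in S A w r" and "reach S x (w j)"
  shows "\<exists>w' r'. ray_in S UNIV w' r' \<and> w' 0 = x"
proof -
  obtain m0 p0 q0 where W0: "walk S m0 p0 q0" "p0 0 = x" "p0 m0 = w j"
    using walk_of_reach[OF assms(2)] by blast
  then have "p0 m0 \<in> range w" by simp
  then obtain m p q where W: "walk S m p q" "p 0 = x" "p m \<in> range w" "inj_on p {..m}"
      "\<forall>i<m. p i \<notin> range w"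
    using shortest_walk_to_set[OF W0(1,2) \<open>p0 m0 \<in> range w\<close>] by blast
  obtain k where k: "p m = w k" using W(3) by blast
  have "\<forall>i<m. p i \<notin> range (\<lambda>n. w (k + n))" using W(5) by auto
  from ray_prepend_path[OF W(1,4) this _ ray_in_shift[OF R, of k]]
  have "ray_in S UNIV (\<lambda>n. if n \<le> m then p n else w (k + (n - m)))
      (\<lambda>n. if n < m then q n else r (k + (n - m)))"
    using k by simp
  moreover have "(\<lambda>n. if n \<le> m then p n else w (k + (n - m))) 0 = x" using W(2) by simp
  ultimately show ?thesis by blast
qed

lemma finite_cycle_of_path:
  assumes f: "f \<in> E" "ends f = {x, y}" "x \<noteq> y" "f \<notin> S"
    and "S \<subseteq> E" "reach S y x"
  shows "\<exists>C. finite_cycle_edges V E ends C \<and> f \<in> C \<and> C \<subseteq> insert f S"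
proof -
  obtain m0 p0 q0 where "walk S m0 p0 q0" "p0 0 = y" "p0 m0 \<in> {x}"
    using walk_of_reach[OF assms(6)] by auto
  then obtain m p q where W: "walk S m p q" "p 0 = y" "p m = x" "inj_on p {..m}"
    using shortest_walk_to_set by blast
  have "m \<ge> 1" using W(2,3) f(3) by (cases m) auto
  define es where "es i = (if i < m then q i else f)" for i
  have edges: "p i \<in> V \<and> es i \<in> E \<and> ends (es i) = {p i, p (Suc i mod Suc m)}"
    if "i < Suc m" for i
  proof (cases "i < m")
    case True
    then have "q i \<in> S" "ends (q i) = {p i, p (Suc i)}" using W(1) unfolding walk_def by auto
    then show ?thesis using True assms(5) ends_subset[of "q i"] unfolding es_def by auto
  next
    case False
    then have "i = m" using that by simp
    then show ?thesis
      using f W(2,3) ends_subset[of f] unfolding es_def by (auto simp: insert_commute)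
  qed
  have "inj_on p {..<Suc m}" using W(4) by (simp add: lessThan_Suc_atMost)
  moreover have "inj_on es {..<Suc m}"
    using path_edges_inj[OF W(1,4)] W(1) f(4) unfolding es_def walk_def inj_on_def
    by (auto simp: less_Suc_eq)
  ultimately have "finite_cycle_edges V E ends (es ` {..<Suc m})"
    unfolding finite_cycle_edges_def using edges by (intro exI[of _ "Suc m"] exI[of _ p] exI[of _ es]) auto
  moreover have "f \<in> es ` {..<Suc m}" unfolding es_def by (auto intro!: image_eqI[of _ _ m])
  moreover have "es ` {..<Suc m} \<subseteq> insert f S" using W(1) unfolding es_def walk_def by auto
  ultimately show ?thesis by blast
qed

lemma loop_finite_cycle:
  assumes "f \<in> E" "ends f = {x}"
  shows "finite_cycle_edges V E ends {f}"
  unfolding finite_cycle_edges_def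
proof (intro exI conjI)
  show "{f} = (\<lambda>_. f) ` {..<1::nat}" by auto
qed (use assms ends_subset in \<open>auto simp: inj_on_def\<close>)

text \<open>The ray from x is traversed backwards on the negative indices.\<close>
lemma double_ray_of_rays:
  assumes f: "f \<in> E" "ends f = {x, y}" "f \<notin> S" "S \<subseteq> E"
    and Rx: "ray_in S UNIV wx rx" "wx 0 = x" and Ry: "ray_in S UNIV wy ry" "wy 0 = y"
    and disjoint: "\<And>a b. wx a \<noteq> wy b"
  shows "\<exists>C. double_ray_edges V E ends C \<and> f \<in> C \<and> C \<subseteq> insert f S"
proof -
  have X: "inj wx" "inj rx" "\<And>i. rx i \<in> S" "\<And>i. ends (rx i) = {wx i, wx (Suc i)}"
    using Rx unfolding ray_in_def by auto
  have Y: "inj wy" "inj ry" "\<And>i. ry i \<in> S" "\<And>i. ends (ry i) = {wy i, wy (Suc i)}"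
    using Ry unfolding ray_in_def by auto
  define vs :: "int \<Rightarrow> 'v" where
    "vs i = (if i \<le> 0 then wx (nat (- i)) else wy (nat (i - 1)))" for i
  define es :: "int \<Rightarrow> 'e" where
    "es i = (if i < 0 then rx (nat (- i - 1)) else if i = 0 then f else ry (nat (i - 1)))" for i
  have edges: "es i \<in> E \<and> ends (es i) = {vs i, vs (i + 1)}" for i
  proof -
    consider "i < 0" | "i = 0" | "i > 0" by linarith
    then show ?thesis
    proof cases
      case 1
      then have "nat (- i) = Suc (nat (- i - 1))" "nat (- (i + 1)) = nat (- i - 1)" by auto
      then show ?thesis
        using 1 X(3,4)[of "nat (- i - 1)"] f(4) unfolding es_def vs_def by (auto simp: insert_commute)
    next
      case 2
      then show ?thesis using f Rx(2) Ry(2) unfolding es_def vs_def by auto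
    next
      case 3
      then have "nat (i + 1 - 1) = Suc (nat (i - 1))" by auto
      then show ?thesis using 3 Y(3,4)[of "nat (i - 1)"] f(4) unfolding es_def vs_def by auto
    qed
  qed
  have "rx a \<noteq> ry b" "ry b \<noteq> rx a" for a b
    using X(4)[of a] Y(4)[of b] disjoint by (metis doubleton_eq_iff)+
  moreover have "f \<notin> range rx" "f \<notin> range ry"
    using X(3) Y(3) f(3) by auto
  ultimately have "inj es"
    using X(2) Y(2) unfolding es_def by (auto intro!: injI split: if_splits simp: inj_eq eq_nat_nat_iff)
  moreover have "wy b \<noteq> wx a" for a b
    using disjoint by metis
  then have "inj vs"
    using X(1) Y(1) disjoint unfolding vs_def by (auto intro!: injI split: if_splits simp: inj_eq eq_nat_nat_iff)
  moreover have "vs i \<in> V" for i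
    using edges[of i] ends_subset by auto
  ultimately have "double_ray_edges V E ends (range es)"
    unfolding double_ray_edges_def using edges by blast
  moreover have "f \<in> range es" using rangeI[of es 0] unfolding es_def by simp
  moreover have "range es \<subseteq> insert f S" using X(3) Y(3) unfolding es_def by auto
  ultimately show ?thesis by blast
qed

lemma reach_along_double_ray:
  fixes vs :: "int \<Rightarrow> 'v"
  assumes step: "\<And>i. adj S (vs i) (vs (i + 1))"
  shows "reach S (vs 0) (vs i)"
proof -
  have reach_nat: "reach S (vs 0) (vs (int t)) \<and> reach S (vs 0) (vs (- int t))" for t
  proof (induction t)
    case (Suc t)
    have "adj S (vs (int t)) (vs (int (Suc t)))" using step[of "int t"] by (simp add: add.commute)
    moreover have "adj S (vs (- int t)) (vs (- int (Suc t)))"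
      using adj_sym[OF step[of "- int (Suc t)"]] by simp
    ultimately show ?case using Suc rtranclp.rtrancl_into_rtrancl by metis
  qed simp
  show ?thesis
  proof (cases "i \<ge> 0")
    case True
    then show ?thesis using reach_nat[of "nat i"] by simp
  next
    case False
    then show ?thesis using reach_nat[of "nat (- i)"] by simp
  qed
qed

lemma elementary_cycle_connected:
  assumes C: "C \<in> elementary_algebraic_cycles V E ends" and CS: "C \<subseteq> S"
  shows "\<exists>v0. \<forall>g\<in>C. \<forall>a\<in>ends g. reach S v0 a"
  using C
proof (cases rule: elementary_algebraic_cycleE)
  case (finite n vs es)
  then have cyc: "\<forall>i<n. ends (es i) = {vs i, vs (Suc i mod n)}" "C = es ` {..<n}"
    by auto
  have "reach S (vs 0) (vs i)" if "i < n" for i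
    using that
  proof (induction i)
    case (Suc i)
    then have "es i \<in> S" "ends (es i) = {vs i, vs (Suc i)}" using cyc CS by auto
    then have "adj S (vs i) (vs (Suc i))" unfolding adj_def by blast
    with Suc show ?case by (simp add: rtranclp.rtrancl_into_rtrancl)
  qed simp
  moreover have "Suc i mod n < n" if "i < n" for i using that by simp
  ultimately have "\<forall>g\<in>C. \<forall>a\<in>ends g. reach S (vs 0) a" using cyc by auto
  then show ?thesis ..
next
  case (double_ray vs es)
  then have dr: "\<forall>i. ends (es i) = {vs i, vs (i + 1)}" "C = range es"
    by auto
  have "es i \<in> S" for i using CS unfolding dr(2) by blast
  then have "adj S (vs i) (vs (i + 1))" for i using dr(1) unfolding adj_def by metis
  then have "reach S (vs 0) (vs i)" for i by (rule reach_along_double_ray)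
  then have "\<forall>g\<in>C. \<forall>a\<in>ends g. reach S (vs 0) a" using dr by auto
  then show ?thesis ..
qed

lemma finite_cycle_end_on_other_edge:
  assumes "n \<ge> 2" "i < n" "\<forall>i<n. ends (es i) = {vs i, vs (Suc i mod n)}" "v \<in> ends (es i)"
  shows "\<exists>j<n. j \<noteq> i \<and> v \<in> ends (es j)"
proof -
  have "v = vs i \<or> v = vs (Suc i mod n)" using assms(2-4) by auto
  then show ?thesis
  proof
    assume "v = vs i"
    define h where "h = (if i = 0 then n - 1 else i - 1)"
    have "h < n" "h \<noteq> i" "Suc h mod n = i"
      using assms(1,2) unfolding h_def by (cases "i = 0"; simp)+
    then show ?thesis using assms(3) \<open>v = vs i\<close> by (intro exI[of _ h]) auto
  next
    assume "v = vs (Suc i mod n)"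
    moreover have "Suc i mod n \<noteq> i"
    proof (cases "Suc i < n")
      case False
      then have "Suc i = n" using assms(2) by simp
      then show ?thesis using assms(1) by auto
    qed simp
    moreover have "Suc i mod n < n" using assms(1) by simp
    ultimately show ?thesis using assms(3) by (intro exI[of _ "Suc i mod n"]) auto
  qed
qed

text \<open>A finite cycle inside a ray: its edge of largest index on the ray has an end
  that no other edge of the cycle can contain.\<close>
lemma ray_contains_no_finite_cycle:
  assumes R: "ray_in S A w r" and C: "finite_cycle_edges V E ends C" and CR: "C \<subseteq> range r"
  shows False
proof -
  have Rr: "inj w" "inj r" "\<And>i. ends (r i) = {w i, w (Suc i)}"
    using R unfolding ray_in_def by auto
  obtain n vs es where "n \<ge> 1" "inj_on vs {..<n}" "inj_on es {..<n}"
      "\<forall>i<n. vs i \<in> V \<and> es i \<in> E \<and> ends (es i) = {vs i, vs (Suc i mod n)}" "C = es ` {..<n}"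
    using C unfolding finite_cycle_edges_def by blast
  then have cyc: "n \<ge> 1" "inj_on es {..<n}"
      "\<forall>i<n. ends (es i) = {vs i, vs (Suc i mod n)}" "C = es ` {..<n}"
    by auto
  define M where "M = Max (r -` C)"
  have fin: "finite (r -` C)" using cyc(4) Rr(2) by (simp add: finite_vimageI)
  have "es 0 \<in> C" using cyc(1,4) by auto
  then have "es 0 \<in> range r" using CR by blast
  then obtain t where "es 0 = r t" by (rule rangeE)
  then have "r -` C \<noteq> {}" using \<open>es 0 \<in> C\<close> by auto
  then have M: "r M \<in> C" "\<And>t. r t \<in> C \<Longrightarrow> t \<le> M"
    using Max_in[OF fin] Max_ge[OF fin] unfolding M_def by auto
  have only: "e = r M" if e: "e \<in> C" "w (Suc M) \<in> ends e" for e
  proof -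
    have "e \<in> range r" using e(1) CR by blast
    then obtain t where t: "e = r t" by (rule rangeE)
    then have "Suc M = t \<or> Suc M = Suc t" using e(2) Rr(1,3) by (auto simp: inj_eq)
    then show ?thesis using M(2) e(1) t by fastforce
  qed
  obtain i where i: "i < n" "es i = r M" using M(1) cyc(4) by auto
  have "w M \<noteq> w (Suc M)" using Rr(1) by (simp add: inj_eq)
  then have "n \<noteq> 1" using i cyc(3) Rr(3)[of M] by (auto simp: doubleton_eq_iff)
  moreover have "w (Suc M) \<in> ends (es i)" using i(2) Rr(3) by auto
  ultimately obtain j where "j < n" "j \<noteq> i" "w (Suc M) \<in> ends (es j)"
    using finite_cycle_end_on_other_edge[OF _ i(1) cyc(3)] cyc(1) by force
  then show False using only[of "es j"] i cyc(2,4) unfolding inj_on_def by auto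
qed

text \<open>A double ray inside a ray: the first vertex of the ray met by the double ray
  would lie on two of its edges.\<close>
lemma ray_contains_no_double_ray:
  assumes R: "ray_in S A w r" and C: "double_ray_edges V E ends C" and CR: "C \<subseteq> range r"
  shows False
proof -
  have Rr: "inj w" "\<And>i. ends (r i) = {w i, w (Suc i)}"
    using R unfolding ray_in_def by auto
  obtain vs :: "int \<Rightarrow> 'v" and es :: "int \<Rightarrow> 'e" where "inj vs" "inj es"
      "\<forall>i. vs i \<in> V \<and> es i \<in> E \<and> ends (es i) = {vs i, vs (i + 1)}" "C = range es"
    using C unfolding double_ray_edges_def by blast
  then have dr: "inj es" "\<forall>i. ends (es i) = {vs i, vs (i + 1)}" "C = range es"
    by auto
  define M where "M = (LEAST t. r t \<in> C)"
  have "es 0 \<in> range r" using CR dr(3) by blast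
  then obtain t where "es 0 = r t" by (rule rangeE)
  then have "\<exists>t. r t \<in> C" using dr(3) by (metis rangeI)
  then have M: "r M \<in> C" "\<And>t. r t \<in> C \<Longrightarrow> M \<le> t"
    unfolding M_def by (auto intro: LeastI_ex Least_le)
  have only: "e = r M" if e: "e \<in> C" "w M \<in> ends e" for e
  proof -
    have "e \<in> range r" using e(1) CR by blast
    then obtain t where t: "e = r t" by (rule rangeE)
    then have "M = t \<or> M = Suc t" using e(2) Rr by (auto simp: inj_eq)
    then show ?thesis using M(2) e(1) t by fastforce
  qed
  have "r M \<in> range es" using M(1) dr(3) by blast
  then obtain a where "r M = es a" by (rule rangeE)
  then have "w M \<in> {vs a, vs (a + 1)}" using Rr(2)[of M] dr(2) by auto
  then obtain b where b: "w M = vs b" by blast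
  have "es b = r M" using only[of "es b"] b dr(2,3) by auto
  moreover have "es (b - 1) = r M" using only[of "es (b - 1)"] b dr(2,3) by auto
  ultimately have "b = b - 1" using injD[OF dr(1)] by metis
  then show False by simp
qed

lemma ray_contains_no_elementary_cycle:
  "ray_in S A w r \<Longrightarrow> C \<in> elementary_algebraic_cycles V E ends \<Longrightarrow> C \<subseteq> range r \<Longrightarrow> False"
  unfolding elementary_algebraic_cycles_def
  using ray_contains_no_finite_cycle ray_contains_no_double_ray by blast

definition component :: "'e set \<Rightarrow> 'v \<Rightarrow> 'v set" where
  "component S x = {z. reach S x z}"

lemma component_eq:
  assumes "reach S x y"
  shows "component S x = component S y"
proof -
  have "reach S y x" using assms by (rule reach_sym)
  then show ?thesis
    unfolding component_def using assms by (auto intro: rtranclp_trans)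
qed

lemma no_edge_leaves_component:
  "cut_edges E ends (component S x \<inter> V) (V - component S x) \<inter> S = {}"
proof -
  have False if g: "g \<in> S" "c \<in> ends g" "c \<in> component S x" "d \<in> ends g" "d \<notin> component S x"
    and "g \<in> E" for g c d
  proof -
    obtain c' d' where "ends g = {c', d'}" using ends_cases[OF \<open>g \<in> E\<close>] by blast
    then have "ends g = {c, d}" using g by auto
    then have "adj S c d" using g(1) unfolding adj_def by blast
    then show False using g(3,5) unfolding component_def by (simp add: rtranclp.rtrancl_into_rtrancl)
  qed
  then show ?thesis unfolding cut_edges_def by (auto simp: disjoint_iff)
qed

end

section \<open>The algebraic cycle matroid\<close>

locale algebraic_cycle_matroid =
  matroid_indep E I + multigraph V E ends
  for V :: "'v set" and E :: "'e set" and ends :: "'e \<Rightarrow> 'v set" and I :: "'e set set" +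
  assumes circuits_eq: "circuits E I = elementary_algebraic_cycles V E ends"
begin

text \<open>The fundamental circuit of an edge f of the cut with respect to a basis avoiding
  the cut crosses the cut only in f, so it is a double ray with a tail on either side.\<close>
lemma small_cut_meets_all_bases:
  assumes "cut_with_small_side V E ends F" "F \<noteq> {}"
  shows "meets_all_bases F"
  unfolding meets_all_bases_def
proof (intro allI impI notI)
  fix K assume K: "maximal_in I K" and FK: "F \<inter> K = {}"
  obtain A B where AB: "A \<union> B = V" "A \<inter> B = {}" "F = cut_edges E ends A B"
    and small: "small_side V E ends A \<or> small_side V E ends B"
    using assms(1) unfolding cut_with_small_side_def by blast
  obtain f where f: "f \<in> F" using assms(2) by blast
  then have fE: "f \<in> E" using AB(3) unfolding cut_edges_def by auto
  obtain C where C: "C \<in> circuits E I" "f \<in> C" "C \<subseteq> insert f K"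
    using fundamental_circuit[OF K fE] f FK by blast
  obtain a0 b0 where ab0: "ends f = {a0, b0}" using ends_cases[OF fE] .
  have "(a \<in> A) = (b \<in> A)" if "e \<in> C" "e \<noteq> f" "ends e = {a, b}" for e a b
  proof -
    have "e \<in> E" "e \<notin> F" using that C(1,3) FK circuit_subset_ground by blast+
    then show ?thesis using cut_edges_iff[OF AB(1,2)] AB(3) that(3) by blast
  qed
  moreover have "(a0 \<in> A) \<noteq> (b0 \<in> A)" using cut_edges_iff[OF AB(1,2) fE ab0] AB(3) f by blast
  ultimately have "(\<exists>w r. ray_in (C - {f}) ({z. z \<in> A} \<inter> V) w r) \<and>
      (\<exists>w r. ray_in (C - {f}) ({z. z \<notin> A} \<inter> V) w r)"
    using elementary_cycle_single_crossing[of C f "\<lambda>z. z \<in> A"] C(1,2) ab0 circuits_eq by blast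
  moreover have "C - {f} \<subseteq> E" using C(1) circuit_subset_ground by blast
  moreover have "{z. z \<in> A} \<inter> V \<subseteq> A \<inter> V" "{z. z \<notin> A} \<inter> V \<subseteq> B \<inter> V" using AB by auto
  ultimately have "has_ray_in V E ends A" "has_ray_in V E ends B"
    unfolding has_ray_in_iff by (meson ray_in_mono)+
  then show False using small unfolding small_side_def by blast
qed

text \<open>By orthogonality, neither a loop nor a finite cycle can meet a cocircuit in
  exactly one edge.\<close>
lemma cocircuit_edge_separates:
  assumes D: "D \<in> cocircuits E I" and f: "f \<in> D"
  shows "\<exists>x y. ends f = {x, y} \<and> x \<noteq> y \<and> \<not> reach (E - D) x y"
proof -
  have "D \<subseteq> E" using D unfolding cocircuit_iff by blast
  then have fE: "f \<in> E" using f by blast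
  obtain x y where xy: "ends f = {x, y}" using ends_cases[OF fE] .
  have single: "C \<notin> elementary_algebraic_cycles V E ends" if "C \<inter> D = {f}" for C
    using circuit_cocircuit_inter_not_singleton[OF D] that circuits_eq by blast
  have "x \<noteq> y"
  proof
    assume "x = y"
    then have "finite_cycle_edges V E ends {f}" using loop_finite_cycle[OF fE] xy by simp
    then show False using single[of "{f}"] f unfolding elementary_algebraic_cycles_def by auto
  qed
  moreover have "\<not> reach (E - D) x y"
  proof
    assume "reach (E - D) x y"
    then have "reach (E - D) y x" by (rule reach_sym)
    then obtain C where C: "finite_cycle_edges V E ends C" "f \<in> C" "C \<subseteq> insert f (E - D)"
      using finite_cycle_of_path[OF fE xy \<open>x \<noteq> y\<close>] f by blast
    then have "C \<inter> D = {f}" using f by auto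
    then show False using single C(1) unfolding elementary_algebraic_cycles_def by auto
  qed
  ultimately show ?thesis using xy by blast
qed

lemma cocircuit_eq_cut_of_rayless_component:
  assumes D: "D \<in> cocircuits E I" and f: "f \<in> D" "x \<in> ends f"
    and rayless: "\<not> has_ray_in V E ends (component (E - D) x)"
  shows "cut_with_small_side V E ends D"
proof -
  define Q where "Q = component (E - D) x \<inter> V"
  define F where "F = cut_edges E ends Q (V - Q)"
  have D': "D \<subseteq> E" "\<forall>S. S \<subset> D \<longrightarrow> \<not> meets_all_bases S" using D cocircuit_iff by auto
  obtain a b where ab: "ends f = {a, b}" "\<not> reach (E - D) a b"
    using cocircuit_edge_separates[OF D f(1)] by blast
  then obtain y where y: "ends f = {x, y}" "\<not> reach (E - D) x y"
    using f(2) reach_sym by (metis insert_commute insert_iff singletonD)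
  have xy: "x \<in> V" "y \<in> V" using ends_subset D'(1) f(1) y(1) by auto
  have "F \<subseteq> D"
    using no_edge_leaves_component[of "E - D" x] unfolding F_def Q_def cut_edges_def by auto
  moreover have "f \<in> F"
    using xy y D'(1) f(1) unfolding F_def Q_def cut_edges_def component_def by auto
  moreover have "small_side V E ends Q"
    using rayless unfolding small_side_def has_ray_in_iff Q_def by (simp add: Int_assoc)
  then have small: "cut_with_small_side V E ends F"
    unfolding cut_with_small_side_def F_def
    by (intro exI[of _ Q] exI[of _ "V - Q"]) (auto simp: Q_def)
  ultimately have "F = D" using small_cut_meets_all_bases D'(2) by blast
  with small show ?thesis by simp
qed

lemma ray_in_component_avoids_cocircuit:
  assumes D: "D \<in> cocircuits E I" and R: "ray_in E (component (E - D) x \<inter> V) w r"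
  shows "ray_in (E - D) (component (E - D) x) w r"
proof -
  have "r i \<notin> D" for i
  proof
    assume "r i \<in> D"
    then obtain a b where ab: "ends (r i) = {a, b}" "\<not> reach (E - D) a b"
      using cocircuit_edge_separates[OF D] by blast
    have "ends (r i) = {w i, w (Suc i)}" "reach (E - D) x (w i)" "reach (E - D) x (w (Suc i))"
      using R unfolding ray_in_def component_def by auto
    moreover have "reach (E - D) (w i) (w (Suc i))"
      using calculation(2,3) reach_sym rtranclp_trans by meson
    ultimately have "reach (E - D) a b"
      using ab(1) reach_sym by (auto simp: doubleton_eq_iff)
    then show False using ab(2) by contradiction
  qed
  then show ?thesis using R unfolding ray_in_def by auto
qed

text \<open>Rays in distinct components of H together contain no circuit: a circuit is
  connected, so it would lie inside a single one of these rays.\<close>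
lemma union_of_component_rays_indep:
  assumes "H \<subseteq> E" and comps: "\<K> \<subseteq> range (component H)"
    and rays: "\<forall>K\<in>\<K>. \<exists>w r. ray_in H K w r \<and> range r = R K"
  shows "(\<Union>K\<in>\<K>. R K) \<in> I"
proof (rule ccontr)
  have RH: "R K \<subseteq> H" if K: "K \<in> \<K>" for K
  proof -
    obtain w r where R: "ray_in H K w r" "range r = R K" using rays K by blast
    from R(1) have "range r \<subseteq> H" unfolding ray_in_def by auto
    with R(2) show ?thesis by simp
  qed
  assume "(\<Union>K\<in>\<K>. R K) \<notin> I"
  moreover have "(\<Union>K\<in>\<K>. R K) \<subseteq> E" using RH assms(1) by blast
  ultimately obtain C where C: "C \<in> circuits E I" "C \<subseteq> (\<Union>K\<in>\<K>. R K)"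
    using dependent_contains_circuit by blast
  then have CH: "C \<subseteq> H" using RH by blast
  have Ccyc: "C \<in> elementary_algebraic_cycles V E ends" using C(1) circuits_eq by simp
  obtain v0 where v0: "\<forall>g\<in>C. \<forall>a\<in>ends g. reach H v0 a"
    using elementary_cycle_connected[OF Ccyc CH] by blast
  have same_component: "K = component H v0" if K: "K \<in> \<K>" "g \<in> C" "g \<in> R K" for K g
  proof -
    obtain w r where R: "ray_in H K w r" "range r = R K" using rays K(1) by blast
    then have "g \<in> range r" using K(3) by simp
    then obtain t where "g = r t" by (rule rangeE)
    then have a: "w t \<in> ends g" "w t \<in> K" using R(1) unfolding ray_in_def by auto
    obtain x where "K = component H x" using comps K(1) by blast
    then have "K = component H (w t)" using a(2) component_eq unfolding component_def by blast
    also have "\<dots> = component H v0" using v0 K(2) a(1) component_eq by (metis reach_sym)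
    finally show ?thesis .
  qed
  have "C \<noteq> {}" using C(1) empty_indep circuit_not_indep by auto
  then obtain g0 K0 where g0: "g0 \<in> C" "K0 \<in> \<K>" "g0 \<in> R K0" using C(2) by blast
  have "C \<subseteq> R K0"
  proof
    fix g assume g: "g \<in> C"
    then obtain K where "K \<in> \<K>" "g \<in> R K" using C(2) by blast
    moreover have "K = K0" using same_component[OF calculation(1) g calculation(2)] same_component[OF g0(2,1,3)] by simp
    ultimately show "g \<in> R K0" by simp
  qed
  moreover obtain w r where "ray_in H K0 w r" "range r = R K0" using rays g0(2) by blast
  ultimately show False using ray_contains_no_elementary_cycle Ccyc by blast
qed

text \<open>The edge where a walk in H leaves the J-component of x closes a circuit with J
  that crosses the boundary of that component once; its tail on the side of x is a ray in J.\<close>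
lemma ray_from_vertex_in_maximal_indep:
  assumes "H \<subseteq> E" "J \<in> I" "J \<subseteq> H" and maximal: "\<forall>z\<in>H - J. insert z J \<notin> I"
    and R: "ray_in J A w r" and "reach H x (w 0)"
  shows "\<exists>w r. ray_in J UNIV w r \<and> w 0 = x"
proof (cases "reach J x (w 0)")
  case True
  then show ?thesis using ray_from_reachable[OF R] by blast
next
  case False
  obtain m p q where W: "walk H m p q" "p 0 = x" "p m = w 0"
    using walk_of_reach[OF assms(6)] by blast
  obtain i where i: "i < m" "reach J x (p i)" "\<not> reach J x (p (Suc i))"
    using exists_index_predicate_lost[of "reach J x" p m] W(2,3) False by auto
  define g where "g = q i"
  have g: "g \<in> H" "ends g = {p i, p (Suc i)}" using W(1) i(1) unfolding walk_def g_def by auto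
  have "g \<notin> J"
  proof
    assume "g \<in> J"
    then have "adj J (p i) (p (Suc i))" using g(2) unfolding adj_def by blast
    then show False using i(2,3) rtranclp.rtrancl_into_rtrancl by metis
  qed
  then have "insert g J \<notin> I" "insert g J \<subseteq> E" using maximal g(1) assms(1,3) by auto
  then obtain C where C: "C \<in> circuits E I" "C \<subseteq> insert g J"
    using dependent_contains_circuit by blast
  have "g \<in> C" using C assms(2) superset_of_circuit_not_indep by blast
  moreover have "reach J x a = reach J x b" if "e \<in> C" "e \<noteq> g" "ends e = {a, b}" for e a b
  proof -
    have "adj J a b" using that C(2) unfolding adj_def by blast
    then show ?thesis using adj_sym rtranclp.rtrancl_into_rtrancl by metis
  qed
  ultimately obtain w' r' where R': "ray_in (C - {g}) ({z. reach J x z} \<inter> V) w' r'"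
    using elementary_cycle_single_crossing[of C g "reach J x"] C(1) circuits_eq g(2) i(2,3) by blast
  then have "ray_in J UNIV w' r'" using C(2) by (blast intro: ray_in_mono)
  moreover have "reach J x (w' 0)" using R' unfolding ray_in_def by auto
  ultimately show ?thesis using ray_from_reachable by blast
qed

text \<open>Choose one ray per component; their union is independent, and a maximal
  independent subset J of E - D containing it has rays starting at every vertex
  of these components.\<close>
lemma indep_with_rays_from_cocircuit_ends:
  assumes D: "D \<in> cocircuits E I"
    and rays: "\<forall>f\<in>D. \<forall>x\<in>ends f. has_ray_in V E ends (component (E - D) x)"
  shows "\<exists>J. J \<in> I \<and> J \<subseteq> E - D \<and> (\<forall>z\<in>(E - D) - J. insert z J \<notin> I) \<and>
           (\<forall>f\<in>D. \<forall>x\<in>ends f. \<exists>w r. ray_in J UNIV w r \<and> w 0 = x)"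
proof -
  define H where "H = E - D"
  define \<K> where "\<K> = component H ` (\<Union>f\<in>D. ends f)"
  define R where "R K = (SOME F. \<exists>w r. ray_in H K w r \<and> range r = F)" for K
  have ray_exists: "\<exists>w r. ray_in H K w r \<and> range r = R K" if K: "K \<in> \<K>" for K
  proof -
    obtain f x where "f \<in> D" "x \<in> ends f" "K = component H x" using K unfolding \<K>_def by blast
    then obtain w r where "ray_in E (K \<inter> V) w r"
      using rays unfolding has_ray_in_iff H_def by blast
    then have "ray_in H K w r"
      using ray_in_component_avoids_cocircuit[OF D] \<open>K = component H x\<close> unfolding H_def by blast
    then have "\<exists>F. \<exists>w r. ray_in H K w r \<and> range r = F" by blast
    then show ?thesis unfolding R_def by (rule someI_ex)
  qed
  have HE: "H \<subseteq> E" unfolding H_def by blast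
  have "\<K> \<subseteq> range (component H)" unfolding \<K>_def by blast
  moreover have "\<forall>K\<in>\<K>. \<exists>w r. ray_in H K w r \<and> range r = R K" using ray_exists by blast
  ultimately have indep: "(\<Union>K\<in>\<K>. R K) \<in> I"
    by (rule union_of_component_rays_indep[OF HE])
  have "R K \<subseteq> H" if K: "K \<in> \<K>" for K
  proof -
    obtain w r where R: "ray_in H K w r" "range r = R K" using ray_exists K by blast
    from R(1) have "range r \<subseteq> H" unfolding ray_in_def by auto
    with R(2) show ?thesis by simp
  qed
  then have "(\<Union>K\<in>\<K>. R K) \<subseteq> H" by blast
  then obtain J where J: "J \<in> I" "(\<Union>K\<in>\<K>. R K) \<subseteq> J" "J \<subseteq> H"
      "\<forall>z\<in>H - J. insert z J \<notin> I"
    using indep_maximal_extension[OF indep _ HE] by blast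
  have "\<exists>w r. ray_in J UNIV w r \<and> w 0 = x" if "f \<in> D" "x \<in> ends f" for f x
  proof -
    have K: "component H x \<in> \<K>" using that unfolding \<K>_def by blast
    then obtain w r where "ray_in H (component H x) w r" "range r = R (component H x)"
      using ray_exists by blast
    moreover have "range r \<subseteq> J" using J(2) K calculation(2) by blast
    ultimately have "ray_in J (component H x) w r" "reach H x (w 0)"
      unfolding ray_in_def component_def by auto
    then show ?thesis
      using ray_from_vertex_in_maximal_indep[OF _ J(1,3,4)] unfolding H_def by blast
  qed
  then show ?thesis using J unfolding H_def by blast
qed

text \<open>If all these components had rays, then for each edge f \<in> D the rays in J from its
  two ends would be disjoint and form with f a double ray, so J would be a basis
  disjoint from D.\<close>
lemma cocircuit_has_rayless_component:
  assumes D: "D \<in> cocircuits E I"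
  shows "\<exists>f\<in>D. \<exists>x\<in>ends f. \<not> has_ray_in V E ends (component (E - D) x)"
proof (rule ccontr)
  assume "\<not> ?thesis"
  then have "\<forall>f\<in>D. \<forall>x\<in>ends f. has_ray_in V E ends (component (E - D) x)" by blast
  then obtain J where J: "J \<in> I" "J \<subseteq> E - D" "\<forall>z\<in>(E - D) - J. insert z J \<notin> I"
      and rays: "\<forall>f\<in>D. \<forall>x\<in>ends f. \<exists>w r. ray_in J UNIV w r \<and> w 0 = x"
    using indep_with_rays_from_cocircuit_ends[OF D] by blast
  have D': "D \<subseteq> E" "meets_all_bases D" using D cocircuit_iff by auto
  have "insert f J \<notin> I" if f: "f \<in> D" for f
  proof -
    obtain x y where xy: "ends f = {x, y}" "\<not> reach (E - D) x y"
      using cocircuit_edge_separates[OF D f] by blast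
    obtain wx rx where Rx: "ray_in J UNIV wx rx" "wx 0 = x" using rays f xy(1) by blast
    obtain wy ry where Ry: "ray_in J UNIV wy ry" "wy 0 = y" using rays f xy(1) by blast
    have disjoint: "wx a \<noteq> wy b" for a b
    proof
      assume meet: "wx a = wy b"
      have "reach J x (wx a)" "reach J (wx a) y"
        using reach_along_ray[OF Rx(1), of a] reach_sym[OF reach_along_ray[OF Ry(1), of b]] Rx(2) Ry(2) meet
        by simp_all
      then have "reach J x y" by (rule rtranclp_trans)
      then show False using xy(2) reach_mono J(2) by blast
    qed
    have "f \<in> E" "f \<notin> J" "J \<subseteq> E" using f D'(1) J(2) by auto
    then obtain C where C: "double_ray_edges V E ends C" "f \<in> C" "C \<subseteq> insert f J"
      using double_ray_of_rays[OF _ xy(1) _ _ Rx Ry disjoint] by blast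
    from C(1) have "C \<in> circuits E I"
      using circuits_eq unfolding elementary_algebraic_cycles_def by simp
    then show ?thesis using C(3) by (rule superset_of_circuit_not_indep)
  qed
  then have "\<forall>z\<in>E - J. insert z J \<notin> I" using J(3) by blast
  with J(1) have "maximal_in I J" by (rule maximal_in_if_insert_not_indep)
  moreover have "J \<inter> D = {}" using J(2) by blast
  ultimately show False using D'(2) unfolding meets_all_bases_def by blast
qed

lemma cocircuit_is_small_cut:
  assumes "D \<in> cocircuits E I"
  shows "cut_with_small_side V E ends D"
  using cocircuit_has_rayless_component[OF assms] cocircuit_eq_cut_of_rayless_component[OF assms]
  by blast

lemma cocircuit_is_skew_cut:
  assumes D: "D \<in> cocircuits E I"
  shows "skew_cut V E ends D"
proof -
  have "meets_all_bases D" "\<forall>S. S \<subset> D \<longrightarrow> \<not> meets_all_bases S"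
    using D cocircuit_iff by auto
  then show ?thesis
    unfolding skew_cut_def
    using cocircuit_is_small_cut[OF D] meets_all_bases_nonempty small_cut_meets_all_bases by blast
qed

lemma skew_cut_is_cocircuit:
  assumes F: "skew_cut V E ends F"
  shows "F \<in> cocircuits E I"
proof -
  have small: "cut_with_small_side V E ends F" "F \<noteq> {}"
    and minimal: "\<And>F'. F' \<subset> F \<Longrightarrow> F' \<noteq> {} \<Longrightarrow> is_cut V E ends F' \<Longrightarrow>
        \<not> cut_with_small_side V E ends F'"
    using F unfolding skew_cut_def by auto
  have "F \<subseteq> E" using small(1) unfolding cut_with_small_side_def cut_edges_def by auto
  moreover have "meets_all_bases F" using small_cut_meets_all_bases[OF small] .
  moreover have "\<not> meets_all_bases S" if S: "S \<subset> F" for S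
  proof
    assume "meets_all_bases S"
    then obtain D where D: "D \<in> cocircuits E I" "D \<subseteq> S"
      using meets_all_bases_contains_cocircuit S \<open>F \<subseteq> E\<close> by (meson order.trans psubset_imp_subset)
    have "cut_with_small_side V E ends D" using cocircuit_is_small_cut[OF D(1)] .
    moreover have "is_cut V E ends D" using calculation
      unfolding cut_with_small_side_def is_cut_def by blast
    moreover have "D \<noteq> {}" using D(1) cocircuit_iff meets_all_bases_nonempty by blast
    ultimately show False using minimal D(2) S by blast
  qed
  ultimately show ?thesis using cocircuit_iff by blast
qed

end

theorem theorem5p1:
  fixes V :: "'v set" and E :: "'e set" and ends :: "'e \<Rightarrow> 'v set" and \<I> :: "'e set set"
  assumes "graph V E ends"
    and "matroid E \<I>"
    and "circuits E \<I> = elementary_algebraic_cycles V E ends"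
  shows "cocircuits E \<I> = {F. skew_cut V E ends F}"
proof -
  interpret algebraic_cycle_matroid V E ends \<I>
    using assms by unfold_locales
  show ?thesis
    using cocircuit_is_skew_cut skew_cut_is_cocircuit by blast
qed

end
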